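(* Let $a>1$ and for $\ell=0,1,\dots$ let $\Phi_{\ell,a}(z)=\mathcal{B}\left(\frac{\mathtt{H}_\ell}{\sqrt{\ell!}}\right)(z)$, where $\mathtt{H}_\ell(x)=h_\ell(x)e^{iax}$. Let $T_a=\frac{\partial}{\partial z}-\frac{ia}{\sqrt2}$. Then for every $\ell\geq1$ and $z\in\mathbb{C}$, $T_a\Phi_{\ell,a}(z)=\Phi_{\ell-1,a}(z)$, i.e. $(\Phi_{\ell,a})_{\ell\ge0}$ is an Appell system with respect to $T_a$.
   Context: $h_\ell(x)=(2^\ell\ell!\sqrt\pi)^{-1/2}H_\ell(x)e^{-x^2/2}$ are the normalized Hermite functions ($H_\ell$ the Hermite polynomials). $\mathcal{B}(\varphi)(z)=\pi^{-1/4}\int_{\mathbb{R}}e^{-\frac12(z^2+x^2)+\sqrt2 zx}\varphi(x)\,dx$ is the Segal-Bargmann transform. *)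

theory Defs
  imports "HOL-Analysis.Analysis"
begin

fun hermite_poly :: "nat \<Rightarrow> real \<Rightarrow> real" where
  "hermite_poly 0 x = 1"
| "hermite_poly (Suc 0) x = 2 * x"
| "hermite_poly (Suc (Suc n)) x = 2 * x * hermite_poly (Suc n) x - 2 * real (Suc n) * hermite_poly n x"

definition hermite_fun :: "nat \<Rightarrow> real \<Rightarrow> real" where
  "hermite_fun l x = (2 ^ l * fact l * sqrt pi) powr (-1/2) * hermite_poly l x * exp (- (x ^ 2) / 2)"

definition bargmann :: "(real \<Rightarrow> complex) \<Rightarrow> complex \<Rightarrow> complex" where
  "bargmann \<phi> z = complex_of_real (pi powr (-1/4)) *
     (\<integral>x. exp (- (z ^ 2 + complex_of_real (x ^ 2)) / 2 + complex_of_real (sqrt 2) * z * complex_of_real x) * \<phi> x \<partial>lborel)"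

definition mod_hermite :: "real \<Rightarrow> nat \<Rightarrow> real \<Rightarrow> complex" where
  "mod_hermite a l x = complex_of_real (hermite_fun l x) * exp (\<i> * complex_of_real (a * x))"

definition Phi :: "nat \<Rightarrow> real \<Rightarrow> complex \<Rightarrow> complex" where
  "Phi l a = bargmann (\<lambda>x. mod_hermite a l x / complex_of_real (sqrt (fact l)))"

end

theory Submission
  imports Defs "HOL-Probability.Probability" "HOL-Real_Asymp.Real_Asymp"
begin

(* Let H_l be the Hermite polynomials, b = sqrt 2 z + i a and c = i a / sqrt 2.  The Bargmann
   integrand of h_l(x) exp (i a x) / sqrt (l!) is a constant times exp (-z^2/2) H_l(x) exp (b x - x^2),
   so Phi_l is determined by the moments

     int H_l(x) exp (b x - x^2) dx = b^l sqrt pi exp (b^2/4).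

   For l = 0 this is the Gaussian integral, obtained from the characteristic function of the
   standard normal distribution after the substitution x = Re b / 2 + y / sqrt 2.  The step
   from l to l + 1 uses H_(l+1) = 2x H_l - H_l': the moment of H_(l+1) minus b times that of H_l
   is the integral of the derivative of H_l(x) exp (b x - x^2), which vanishes because H_l grows
   at most exponentially.  Once the normalisations cancel, Phi_l(z) = exp (c z + c^2/2) (z + c)^l / l!,
   and d/dz - c maps this expression for l to the one for l - 1. *)

section \<open>Gaussian integrals with a complex linear term\<close>

definition gauss_exp :: "complex \<Rightarrow> real \<Rightarrow> complex" where
  "gauss_exp b x = exp (b * of_real x - of_real x ^ 2)"

lemma norm_gauss_exp: "norm (gauss_exp b x) = exp (Re b * x - x ^ 2)"
  unfolding gauss_exp_def norm_exp_eq_Re by simp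

lemma continuous_on_gauss_exp [continuous_intros]: "continuous_on S (gauss_exp b)"
  unfolding gauss_exp_def by (intro continuous_intros)

lemma gauss_exp_has_vector_derivative:
  "(gauss_exp b has_vector_derivative (b - 2 * of_real x) * gauss_exp b x) (at x)"
proof -
  have "((\<lambda>w. exp (b * w - w ^ 2)) has_field_derivative exp (b * of_real x - of_real x ^ 2) * (b - 2 * of_real x)) (at (of_real x))"
    by (auto intro!: derivative_eq_intros)
  from has_vector_derivative_real_field[OF this] show ?thesis
    unfolding gauss_exp_def by (simp add: mult.commute)
qed

lemma gauss_exp_complete_square:
  fixes b :: complex and y :: real
  shows "gauss_exp b (Re b / 2 + y / sqrt 2) =
    exp (b ^ 2 / 4) * of_real (exp (Im b ^ 2 / 4)) *
    (of_real (exp (- (y ^ 2) / 2)) * iexp (Im b / sqrt 2 * y))"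
proof -
  have "b * of_real (Re b / 2 + y / sqrt 2) - of_real (Re b / 2 + y / sqrt 2) ^ 2 =
    b ^ 2 / 4 + of_real (Im b ^ 2 / 4) + (of_real (- (y ^ 2) / 2) + \<i> * of_real (Im b / sqrt 2 * y))"
    by (simp add: complex_eq_iff power2_eq_square field_simps)
  then show ?thesis
    unfolding gauss_exp_def by (simp only: exp_add exp_of_real mult.assoc)
qed

lemma gaussian_fourier_integral:
  "(\<integral>y. of_real (exp (- (y ^ 2) / 2)) * iexp (t * y) \<partial>lborel) = of_real (sqrt (2 * pi) * exp (- (t ^ 2) / 2))"
proof -
  have "of_real (exp (- (t ^ 2) / 2)) = char std_normal_distribution t"
    by (simp add: char_std_normal_distribution)
  also have "\<dots> = (\<integral>y. (1 / sqrt (2 * pi)) *\<^sub>R (of_real (exp (- (y ^ 2) / 2)) * iexp (t * y)) \<partial>lborel)"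
    unfolding char_def
    by (subst integral_density) (auto simp: std_normal_density_def scaleR_conv_of_real intro!: Bochner_Integration.integral_cong)
  finally show ?thesis
    by (simp add: scaleR_conv_of_real field_simps)
qed

lemma integrable_gaussian_fourier:
  "integrable lborel (\<lambda>y. of_real (exp (- (y ^ 2) / 2)) * iexp (t * y))"
proof (rule Bochner_Integration.integrable_bound)
  have "integrable lborel (\<lambda>y. sqrt (2 * pi) * std_normal_density y)"
    by simp
  then show "integrable lborel (\<lambda>y::real. exp (- (y ^ 2) / 2))"
    by (simp add: std_normal_density_def)
qed (auto simp: norm_mult)

lemma
  fixes b :: complex
  shows integrable_gauss_exp: "integrable lborel (gauss_exp b)"
    and integral_gauss_exp: "integral\<^sup>L lborel (gauss_exp b) = of_real (sqrt pi) * exp (b ^ 2 / 4)"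
proof -
  have c: "1 / sqrt 2 \<noteq> (0::real)"
    by simp
  define C where "C = exp (b ^ 2 / 4) * of_real (exp (Im b ^ 2 / 4))"
  have shift: "(\<lambda>y. gauss_exp b (Re b / 2 + 1 / sqrt 2 * y)) =
    (\<lambda>y. C * (of_real (exp (- (y ^ 2) / 2)) * iexp (Im b / sqrt 2 * y)))"
    using gauss_exp_complete_square[of b] by (simp add: C_def)
  have "integrable lborel (\<lambda>y. gauss_exp b (Re b / 2 + 1 / sqrt 2 * y))"
    unfolding shift by (intro integrable_mult_right integrable_gaussian_fourier)
  then show "integrable lborel (gauss_exp b)"
    using lborel_integrable_real_affine_iff[OF c] by blast
  have "integral\<^sup>L lborel (gauss_exp b) = \<bar>1 / sqrt 2\<bar> *\<^sub>R (\<integral>y. gauss_exp b (Re b / 2 + 1 / sqrt 2 * y) \<partial>lborel)"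
    by (rule lborel_integral_real_affine[OF c])
  also have "\<dots> = (1 / sqrt 2) *\<^sub>R (C * of_real (sqrt (2 * pi) * exp (- ((Im b / sqrt 2) ^ 2) / 2)))"
    by (simp only: shift integral_mult_right_zero gaussian_fourier_integral) simp
  also have "\<dots> = of_real (1 / sqrt 2 * sqrt (2 * pi)) * (exp (b ^ 2 / 4) * of_real (exp (Im b ^ 2 / 4) * exp (- ((Im b / sqrt 2) ^ 2) / 2)))"
    by (simp only: C_def scaleR_conv_of_real of_real_mult mult_ac)
  also have "\<dots> = of_real (sqrt pi) * exp (b ^ 2 / 4)"
    by (simp add: real_sqrt_mult power_divide flip: exp_add)
  finally show "integral\<^sup>L lborel (gauss_exp b) = of_real (sqrt pi) * exp (b ^ 2 / 4)" .
qed

section \<open>Functions of exponential growth\<close>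

definition exp_growth :: "(real \<Rightarrow> complex) \<Rightarrow> bool" where
  "exp_growth g \<longleftrightarrow> (\<exists>D m. \<forall>x. norm (g x) \<le> D * exp (m * \<bar>x\<bar>))"

lemma exp_growthE:
  assumes "exp_growth g"
  obtains D m where "D \<ge> 0" "\<And>x. norm (g x) \<le> D * exp (m * \<bar>x\<bar>)"
proof -
  obtain D m where bound: "\<And>x. norm (g x) \<le> D * exp (m * \<bar>x\<bar>)"
    using assms unfolding exp_growth_def by blast
  have "D \<ge> 0"
    using order_trans[OF norm_ge_zero bound[of 0]] by simp
  with bound show thesis
    using that by blast
qed

lemma exp_growth_const: "exp_growth (\<lambda>x. c)"
  unfolding exp_growth_def by (intro exI[of _ "norm c"] exI[of _ 0]) simp

lemma exp_growth_of_real: "exp_growth (\<lambda>x. of_real x)"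
proof -
  have "\<bar>x\<bar> \<le> exp \<bar>x\<bar>" for x :: real
    using exp_ge_add_one_self[of "\<bar>x\<bar>"] by linarith
  then show ?thesis
    unfolding exp_growth_def by (intro exI[of _ 1] exI[of _ 1]) simp
qed

lemma exp_growth_add:
  assumes "exp_growth f" "exp_growth g"
  shows "exp_growth (\<lambda>x. f x + g x)"
proof -
  obtain D1 m1 where f: "D1 \<ge> 0" "\<And>x. norm (f x) \<le> D1 * exp (m1 * \<bar>x\<bar>)"
    using assms(1) by (erule exp_growthE)
  obtain D2 m2 where g: "D2 \<ge> 0" "\<And>x. norm (g x) \<le> D2 * exp (m2 * \<bar>x\<bar>)"
    using assms(2) by (erule exp_growthE)
  have "norm (f x + g x) \<le> (D1 + D2) * exp (max m1 m2 * \<bar>x\<bar>)" for x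
  proof -
    have "norm (f x + g x) \<le> D1 * exp (m1 * \<bar>x\<bar>) + D2 * exp (m2 * \<bar>x\<bar>)"
      using norm_triangle_ineq[of "f x" "g x"] f(2)[of x] g(2)[of x] by linarith
    also have "\<dots> \<le> D1 * exp (max m1 m2 * \<bar>x\<bar>) + D2 * exp (max m1 m2 * \<bar>x\<bar>)"
      using f(1) g(1) by (intro add_mono mult_left_mono) (auto intro: mult_right_mono)
    finally show ?thesis
      by (simp add: algebra_simps)
  qed
  then show ?thesis
    unfolding exp_growth_def by blast
qed

lemma exp_growth_mult:
  assumes "exp_growth f" "exp_growth g"
  shows "exp_growth (\<lambda>x. f x * g x)"
proof -
  obtain D1 m1 where f: "D1 \<ge> 0" "\<And>x. norm (f x) \<le> D1 * exp (m1 * \<bar>x\<bar>)"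
    using assms(1) by (erule exp_growthE)
  obtain D2 m2 where g: "D2 \<ge> 0" "\<And>x. norm (g x) \<le> D2 * exp (m2 * \<bar>x\<bar>)"
    using assms(2) by (erule exp_growthE)
  have "norm (f x * g x) \<le> (D1 * D2) * exp ((m1 + m2) * \<bar>x\<bar>)" for x
  proof -
    have "norm (f x * g x) \<le> (D1 * exp (m1 * \<bar>x\<bar>)) * (D2 * exp (m2 * \<bar>x\<bar>))"
      unfolding norm_mult using f g by (intro mult_mono) auto
    then show ?thesis
      by (simp add: algebra_simps flip: exp_add)
  qed
  then show ?thesis
    unfolding exp_growth_def by blast
qed

lemma exp_growth_diff:
  assumes "exp_growth f" "exp_growth g"
  shows "exp_growth (\<lambda>x. f x - g x)"
  using exp_growth_add[OF assms(1) exp_growth_mult[OF exp_growth_const[of "-1"] assms(2)]] by simp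

lemma exp_growth_gauss_exp_bound:
  assumes "exp_growth g"
  obtains D c where "\<And>x. norm (g x * gauss_exp b x) \<le> D * exp (c * \<bar>x\<bar> - x ^ 2)"
proof -
  obtain D m where g: "D \<ge> 0" "\<And>x. norm (g x) \<le> D * exp (m * \<bar>x\<bar>)"
    using assms by (erule exp_growthE)
  have "norm (g x * gauss_exp b x) \<le> D * exp ((m + \<bar>Re b\<bar>) * \<bar>x\<bar> - x ^ 2)" for x
  proof -
    have "Re b * x \<le> \<bar>Re b\<bar> * \<bar>x\<bar>"
      by (metis abs_ge_self abs_mult)
    then have "norm (gauss_exp b x) \<le> exp (\<bar>Re b\<bar> * \<bar>x\<bar> - x ^ 2)"
      by (simp add: norm_gauss_exp)
    then have "norm (g x * gauss_exp b x) \<le> D * exp (m * \<bar>x\<bar>) * exp (\<bar>Re b\<bar> * \<bar>x\<bar> - x ^ 2)"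
      unfolding norm_mult using g by (intro mult_mono) auto
    then show ?thesis
      by (simp add: algebra_simps flip: exp_add)
  qed
  then show thesis by (rule that)
qed

lemma tendsto_exp_abs_quadratic:
  shows "((\<lambda>x::real. exp (c * \<bar>x\<bar> - x ^ 2)) \<longlongrightarrow> 0) at_top"
    and "((\<lambda>x::real. exp (c * \<bar>x\<bar> - x ^ 2)) \<longlongrightarrow> 0) at_bot"
  by real_asymp+

lemma integrable_exp_abs_quadratic: "integrable lborel (\<lambda>x::real. exp (c * \<bar>x\<bar> - x ^ 2))"
proof (rule Bochner_Integration.integrable_bound)
  show "integrable lborel (\<lambda>x. norm (gauss_exp c x) + norm (gauss_exp (- c) x))"
    by (intro Bochner_Integration.integrable_add integrable_norm integrable_gauss_exp)
  have "exp (c * \<bar>x\<bar> - x ^ 2) \<le> norm (gauss_exp c x) + norm (gauss_exp (- c) x)" for x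
    using exp_gt_zero[of "c * x - x ^ 2"] exp_gt_zero[of "- (c * x) - x ^ 2"]
    by (cases "x \<ge> 0") (simp_all add: norm_gauss_exp)
  then show "AE x in lborel. norm (exp (c * \<bar>x\<bar> - x ^ 2)) \<le> norm (norm (gauss_exp c x) + norm (gauss_exp (- c) x))"
    by (intro AE_I2) (simp add: abs_of_nonneg)
qed simp

lemma integrable_exp_growth_gauss_exp:
  assumes "exp_growth g" "continuous_on UNIV g"
  shows "integrable lborel (\<lambda>x. g x * gauss_exp b x)"
proof -
  obtain D c where bound: "\<And>x. norm (g x * gauss_exp b x) \<le> D * exp (c * \<bar>x\<bar> - x ^ 2)"
    using exp_growth_gauss_exp_bound[OF assms(1), where b = b] by blast
  show ?thesis
  proof (rule Bochner_Integration.integrable_bound)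
    show "integrable lborel (\<lambda>x. D * exp (c * \<bar>x\<bar> - x ^ 2))"
      by (intro integrable_mult_right integrable_exp_abs_quadratic)
    show "(\<lambda>x. g x * gauss_exp b x) \<in> borel_measurable lborel"
      by (simp add: borel_measurable_continuous_onI continuous_on_mult assms(2) continuous_on_gauss_exp)
    show "AE x in lborel. norm (g x * gauss_exp b x) \<le> norm (D * exp (c * \<bar>x\<bar> - x ^ 2))"
      by (intro AE_I2 order_trans[OF bound]) (simp only: real_norm_def abs_ge_self)
  qed
qed

lemma tendsto_exp_growth_gauss_exp:
  assumes "exp_growth g"
  shows "((\<lambda>x. g x * gauss_exp b x) \<longlongrightarrow> 0) at_top"
    and "((\<lambda>x. g x * gauss_exp b x) \<longlongrightarrow> 0) at_bot"
proof -
  obtain D c where bound: "\<And>x. norm (g x * gauss_exp b x) \<le> D * exp (c * \<bar>x\<bar> - x ^ 2)"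
    using exp_growth_gauss_exp_bound[OF assms, where b = b] by blast
  have eventually_bound: "\<forall>\<^sub>F x in F. norm (g x * gauss_exp b x) \<le> D * exp (c * \<bar>x\<bar> - x ^ 2)" for F
    by (intro always_eventually allI bound)
  show "((\<lambda>x. g x * gauss_exp b x) \<longlongrightarrow> 0) at_top"
    by (rule Lim_null_comparison[OF eventually_bound tendsto_mult_right_zero[OF tendsto_exp_abs_quadratic(1)]])
  show "((\<lambda>x. g x * gauss_exp b x) \<longlongrightarrow> 0) at_bot"
    by (rule Lim_null_comparison[OF eventually_bound tendsto_mult_right_zero[OF tendsto_exp_abs_quadratic(2)]])
qed

lemma integral_gauss_exp_by_parts:
  assumes deriv: "\<And>x. (g has_vector_derivative g' x) (at x)"
    and growth: "exp_growth g" "exp_growth g'"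
    and cont: "continuous_on UNIV g'"
  shows "(\<integral>x. (g' x + (b - 2 * of_real x) * g x) * gauss_exp b x \<partial>lborel) = 0"
proof -
  define h where "h x = g' x + (b - 2 * of_real x) * g x" for x
  have cont_g: "continuous_on UNIV g"
    using deriv by (meson continuous_at_imp_continuous_on has_vector_derivative_continuous)
  have "exp_growth h"
    unfolding h_def using growth by (intro exp_growth_add exp_growth_mult exp_growth_diff exp_growth_const exp_growth_of_real)
  moreover have cont_h: "continuous_on UNIV h"
    unfolding h_def using cont cont_g by (intro continuous_intros)
  ultimately have integrable_h: "integrable lborel (\<lambda>x. h x * gauss_exp b x)"
    by (rule integrable_exp_growth_gauss_exp)
  have "(LBINT x=-\<infinity>..\<infinity>. h x * gauss_exp b x) = 0 - 0"
  proof (rule interval_integral_FTC_integrable[where F = "\<lambda>x. g x * gauss_exp b x"])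
    show "((\<lambda>x. g x * gauss_exp b x) has_vector_derivative h x * gauss_exp b x) (at x)" for x
      using has_vector_derivative_mult[OF deriv gauss_exp_has_vector_derivative]
      by (simp add: h_def algebra_simps)
    have "continuous_on UNIV (\<lambda>x. h x * gauss_exp b x)"
      using cont_h by (intro continuous_intros)
    then show "isCont (\<lambda>x. h x * gauss_exp b x) x" for x
      by (simp add: continuous_on_eq_continuous_at)
    show "set_integrable lborel (einterval (-\<infinity>) \<infinity>) (\<lambda>x. h x * gauss_exp b x)"
      using integrable_h by (simp add: set_integrable_def einterval_eq_UNIV)
    show "(((\<lambda>x. g x * gauss_exp b x) \<circ> real_of_ereal) \<longlongrightarrow> 0) (at_right (-\<infinity>))"
      unfolding ereal_tendsto_simps1 by (rule tendsto_exp_growth_gauss_exp(2)[OF growth(1)])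
    show "(((\<lambda>x. g x * gauss_exp b x) \<circ> real_of_ereal) \<longlongrightarrow> 0) (at_left \<infinity>)"
      unfolding ereal_tendsto_simps1 by (rule tendsto_exp_growth_gauss_exp(1)[OF growth(1)])
  qed auto
  then show ?thesis
    by (simp add: interval_lebesgue_integral_def set_lebesgue_integral_def einterval_eq_UNIV h_def)
qed

section \<open>Hermite moments\<close>

lemma hermite_poly_Suc:
  "hermite_poly (Suc l) x = 2 * x * hermite_poly l x - 2 * real l * hermite_poly (l - 1) x"
  by (cases l) simp_all

lemma hermite_poly_has_real_derivative:
  "(hermite_poly l has_real_derivative 2 * real l * hermite_poly (l - 1) x) (at x)"
proof (induction l arbitrary: x rule: induct_nat_012)
  case (ge2 n)
  have "hermite_poly (Suc (Suc n)) = (\<lambda>x. 2 * x * hermite_poly (Suc n) x - 2 * real (Suc n) * hermite_poly n x)"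
    by auto
  moreover have "((\<lambda>x. 2 * x * hermite_poly (Suc n) x - 2 * real (Suc n) * hermite_poly n x) has_real_derivative
      2 * hermite_poly (Suc n) x + 2 * x * (2 * real (Suc n) * hermite_poly n x) - 2 * real (Suc n) * (2 * real n * hermite_poly (n - 1) x)) (at x)"
    using ge2.IH by (auto intro!: derivative_eq_intros)
  moreover have "2 * hermite_poly (Suc n) x + 2 * x * (2 * real (Suc n) * hermite_poly n x) - 2 * real (Suc n) * (2 * real n * hermite_poly (n - 1) x)
      = 2 * real (Suc (Suc n)) * hermite_poly (Suc n) x"
    by (simp add: hermite_poly_Suc[of n] algebra_simps)
  ultimately show ?case
    by simp
next
  case 0
  have "hermite_poly 0 = (\<lambda>x. 1)"
    by auto
  then show ?case
    by simp
next
  case 1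
  have "hermite_poly (Suc 0) = (\<lambda>x. 2 * x)"
    by auto
  then show ?case
    by (auto intro!: derivative_eq_intros)
qed

lemma continuous_on_hermite_poly [continuous_intros]: "continuous_on S (hermite_poly l)"
  using hermite_poly_has_real_derivative
  by (meson DERIV_isCont continuous_at_imp_continuous_on)

lemma exp_growth_hermite_poly: "exp_growth (\<lambda>x. of_real (hermite_poly l x))"
proof (induction l rule: induct_nat_012)
  case (ge2 n)
  have "exp_growth (\<lambda>x. 2 * of_real x * of_real (hermite_poly (Suc n) x) - of_real (2 * real (Suc n)) * of_real (hermite_poly n x))"
    using ge2.IH by (intro exp_growth_diff exp_growth_mult exp_growth_const exp_growth_of_real)
  then show ?case
    by simp
qed (auto intro: exp_growth_const exp_growth_mult exp_growth_of_real)

lemma hermite_moment_Suc: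
  "(\<integral>x. of_real (hermite_poly (Suc l) x) * gauss_exp b x \<partial>lborel)
     = b * (\<integral>x. of_real (hermite_poly l x) * gauss_exp b x \<partial>lborel)"
proof -
  define H where "H k x = (of_real (hermite_poly k x) :: complex)" for k x
  define H' where "H' x = of_real (2 * real l) * H (l - 1) x" for x
  have growth: "exp_growth (H k)" for k
    unfolding H_def by (rule exp_growth_hermite_poly)
  have cont: "continuous_on UNIV (H k)" for k
    unfolding H_def by (intro continuous_intros)
  have deriv: "(H l has_vector_derivative H' x) (at x)" for x
    unfolding H_def H'_def using has_vector_derivative_of_real[OF hermite_poly_has_real_derivative] by simp
  have growth': "exp_growth H'" and cont': "continuous_on UNIV H'"
    unfolding H'_def by (intro exp_growth_mult exp_growth_const growth continuous_intros cont)+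
  have recurrence: "H (Suc l) x * gauss_exp b x = b * (H l x * gauss_exp b x) - (H' x + (b - 2 * of_real x) * H l x) * gauss_exp b x" for x
    unfolding H_def H'_def hermite_poly_Suc by (simp add: algebra_simps)
  have "(\<integral>x. H (Suc l) x * gauss_exp b x \<partial>lborel)
      = b * (\<integral>x. H l x * gauss_exp b x \<partial>lborel) - (\<integral>x. (H' x + (b - 2 * of_real x) * H l x) * gauss_exp b x \<partial>lborel)"
  proof -
    have "integrable lborel (\<lambda>x. H l x * gauss_exp b x)"
      by (intro integrable_exp_growth_gauss_exp growth cont)
    moreover have "integrable lborel (\<lambda>x. (H' x + (b - 2 * of_real x) * H l x) * gauss_exp b x)"
      by (intro integrable_exp_growth_gauss_exp exp_growth_add exp_growth_mult exp_growth_diff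
          exp_growth_const exp_growth_of_real growth growth' continuous_intros cont cont')
    ultimately show ?thesis
      unfolding recurrence by simp
  qed
  also have "(\<integral>x. (H' x + (b - 2 * of_real x) * H l x) * gauss_exp b x \<partial>lborel) = 0"
    by (rule integral_gauss_exp_by_parts[OF deriv growth growth' cont'])
  finally show ?thesis
    by (simp add: H_def)
qed

lemma hermite_moment:
  "(\<integral>x. of_real (hermite_poly l x) * gauss_exp b x \<partial>lborel) = b ^ l * (of_real (sqrt pi) * exp (b ^ 2 / 4))"
  by (induction l) (simp_all add: hermite_moment_Suc integral_gauss_exp)

section \<open>The Bargmann transform of modulated Hermite functions\<close>

lemma hermite_normalization_constant:
  "pi powr (-1/4) * (2 ^ l * fact l * sqrt pi) powr (-1/2) / sqrt (fact l) * sqrt pi = 1 / (sqrt 2 ^ l * fact l)"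
proof -
  have "(2 ^ l * fact l * sqrt pi) powr (-1/2) = 1 / (sqrt 2 ^ l * sqrt (fact l) * sqrt (sqrt pi))"
    by (simp add: powr_minus_divide powr_mult powr_half_sqrt real_sqrt_power)
  moreover have "pi powr (-1/4) = 1 / sqrt (sqrt pi)"
    by (simp add: powr_minus_divide powr_half_sqrt [symmetric] powr_powr)
  moreover have "sqrt (sqrt pi) * sqrt (sqrt pi) = sqrt pi" "sqrt (fact l) * sqrt (fact l) = (fact l :: real)"
    by simp_all
  ultimately show ?thesis
    by (simp only:) (simp add: field_simps)
qed

lemma bargmann_mod_hermite_integrand:
  fixes z :: complex
  shows "exp (- (z ^ 2 + of_real (x ^ 2)) / 2 + of_real (sqrt 2) * z * of_real x) * (mod_hermite a l x / of_real (sqrt (fact l)))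
    = of_real ((2 ^ l * fact l * sqrt pi) powr (-1/2) / sqrt (fact l)) * exp (- (z ^ 2) / 2) *
      (of_real (hermite_poly l x) * gauss_exp (of_real (sqrt 2) * z + \<i> * of_real a) x)"
proof -
  have exponent: "- (z ^ 2 + of_real (x ^ 2)) / 2 + of_real (sqrt 2) * z * of_real x + of_real (- (x ^ 2) / 2) + \<i> * of_real (a * x)
      = - (z ^ 2) / 2 + ((of_real (sqrt 2) * z + \<i> * of_real a) * of_real x - of_real x ^ 2)"
    by (simp add: field_simps)
  have "exp (- (z ^ 2 + of_real (x ^ 2)) / 2 + of_real (sqrt 2) * z * of_real x) * exp (of_real (- (x ^ 2) / 2)) * exp (\<i> * of_real (a * x))
      = exp (- (z ^ 2) / 2) * gauss_exp (of_real (sqrt 2) * z + \<i> * of_real a) x"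
    unfolding gauss_exp_def exp_add [symmetric] exponent ..
  then show ?thesis
    unfolding mod_hermite_def hermite_fun_def by (simp add: exp_of_real [symmetric] field_simps)
qed

definition exp_monomial :: "complex \<Rightarrow> nat \<Rightarrow> complex \<Rightarrow> complex" where
  "exp_monomial c l z = exp (c * z + c ^ 2 / 2) * (z + c) ^ l / fact l"

lemma Phi_eq_exp_monomial: "Phi l a = exp_monomial (\<i> * of_real (a / sqrt 2)) l"
proof
  fix z :: complex
  define c where "c = \<i> * of_real (a / sqrt 2)"
  define K where "K = (2 ^ l * fact l * sqrt pi) powr (-1/2) / sqrt (fact l)"
  have b: "of_real (sqrt 2) * z + \<i> * of_real a = of_real (sqrt 2) * (z + c)"
    by (simp add: c_def field_simps)
  have "Phi l a z = of_real (pi powr (-1/4) * K * sqrt pi) * (exp (- (z ^ 2) / 2) * exp ((of_real (sqrt 2) * (z + c)) ^ 2 / 4)) * (of_real (sqrt 2) * (z + c)) ^ l"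
    unfolding Phi_def bargmann_def bargmann_mod_hermite_integrand K_def [symmetric] b
    by (simp only: integral_mult_right_zero hermite_moment) (simp add: mult_ac)
  also have "\<dots> = of_real (1 / (sqrt 2 ^ l * fact l)) * exp (c * z + c ^ 2 / 2) * (of_real (sqrt 2 ^ l) * (z + c) ^ l)"
  proof -
    have "pi powr (-1/4) * K * sqrt pi = 1 / (sqrt 2 ^ l * fact l)"
      using hermite_normalization_constant[of l] by (simp add: K_def)
    moreover have "- (z ^ 2) / 2 + (of_real (sqrt 2) * (z + c)) ^ 2 / 4 = c * z + c ^ 2 / 2"
      by (simp add: power_mult_distrib power2_eq_square field_simps flip: of_real_mult)
    then have "exp (- (z ^ 2) / 2) * exp ((of_real (sqrt 2) * (z + c)) ^ 2 / 4) = exp (c * z + c ^ 2 / 2)"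
      by (simp flip: exp_add)
    ultimately show ?thesis
      by (simp add: power_mult_distrib)
  qed
  also have "\<dots> = exp_monomial c l z"
    by (simp add: exp_monomial_def field_simps)
  finally show "Phi l a z = exp_monomial (\<i> * of_real (a / sqrt 2)) l z"
    by (simp add: c_def)
qed

lemma exp_monomial_has_field_derivative:
  "(exp_monomial c (Suc n) has_field_derivative c * exp_monomial c (Suc n) z + exp_monomial c n z) (at z)"
proof -
  define E where "E w = exp (c * w + c ^ 2 / 2)" for w
  have "(E has_field_derivative c * E z) (at z)"
    unfolding E_def by (auto intro!: derivative_eq_intros)
  moreover have "((\<lambda>w. (w + c) ^ Suc n) has_field_derivative of_nat (Suc n) * (z + c) ^ n) (at z)"
    by (rule DERIV_cong [OF DERIV_power_Suc [OF DERIV_add [OF DERIV_ident DERIV_const]]]) simp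
  ultimately have "((\<lambda>w. E w * (w + c) ^ Suc n / fact (Suc n)) has_field_derivative
      (c * E z * (z + c) ^ Suc n + of_nat (Suc n) * (z + c) ^ n * E z) / fact (Suc n)) (at z)"
    by (intro DERIV_cdivide DERIV_mult)
  moreover have "(c * E z * (z + c) ^ Suc n + of_nat (Suc n) * (z + c) ^ n * E z) / fact (Suc n)
      = c * (E z * (z + c) ^ Suc n / fact (Suc n)) + E z * (z + c) ^ n / fact n"
    by (simp add: add_divide_distrib fact_Suc [of n] mult_ac del: of_nat_Suc)
  ultimately show ?thesis
    unfolding exp_monomial_def [abs_def] E_def by simp
qed

theorem theorem3p26:
  fixes a :: real and l :: nat and z :: complex
  assumes "a > 1" and "l \<ge> 1"
  shows "Phi l a field_differentiable (at z) \<and>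
         deriv (Phi l a) z - \<i> * complex_of_real (a / sqrt 2) * Phi l a z = Phi (l - 1) a z"
proof -
  obtain n where l: "l = Suc n"
    using assms(2) by (cases l) auto
  have "(Phi l a has_field_derivative \<i> * of_real (a / sqrt 2) * Phi l a z + Phi (l - 1) a z) (at z)"
    using exp_monomial_has_field_derivative[of "\<i> * of_real (a / sqrt 2)" n z]
    unfolding l Phi_eq_exp_monomial by simp
  then show ?thesis
    by (auto simp: field_differentiable_def DERIV_imp_deriv)
qed

end
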